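(* Let $d\ge1$ and let $T>0$ (finite), $D\in\{1,\dots,d\}$ and $C>0$ be random variables. Set $\tilde T=T\wedge C$ and $\tilde D=D\,\mathbf 1\{T\le C\}$. Then for all $t\in\mathcal J$: $$P(\tilde T<t\mid T\ge t)=B(t)+\int_{(0,t)}\frac{\tilde S(s-)}{S(s)}(\tilde H-H)(ds)$$ and $$P(T\le t\mid C\ge t)=\sum_{j=1}^d\int_{(0,t]}\frac{1}{K(s-)}\tilde F_j(ds)+\int_{(0,t)}\frac{\check S(s)}{K(s)}(\check H_0-H_0)(ds).$$
   Context: Functions of the event time: - $S(t)=P(T>t)$. - $F_j(t)=P(T\le t,D=j)$. - $H_j(t)=\int_{(0,t]}S(s-)^{-1}F_j(ds)$, and $H=\sum_{j=1}^dH_j$. Censoring-time quantities: - $K(t)=P(C>t)$ and $G(t)=P(C\le t)$. - $H_0(t)=\int_{(0,t]}K(s-)^{-1}G(ds)$. Observed quantities: - $\tilde S(t)=P(\tilde T>t)$. - $\tilde F_j(t)=P(\tilde T\le t,\tilde D=j)$ for $j=0,\dots,d$. - $\tilde H_j(t)=\int_{(0,t]}\tilde S(s-)^{-1}\tilde F_j(ds)$, and $\tilde H=\sum_{j=1}^d\tilde H_j$. - $\check H_0(t)=\int_{(0,t]}(1-\Delta\tilde H(s))^{-1}\tilde H_0(ds)$. - $\check S(t)=\tilde S(t-)(1-\Delta\tilde H(t))$. - $B(t)=\int_{(0,t)}S(s)^{-1}\tilde F_0(ds)$. - Division by $0$ occurs only on null sets of the integrator. - $\mathcal J=\{t\ge0:\tilde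 S(t)>0\}$. *)

theory Defs
  imports "HOL-Probability.Probability"
begin

definition leftlim :: "(real \<Rightarrow> real) \<Rightarrow> real \<Rightarrow> real" where
  "leftlim f t = Lim (at_left t) f"

definition condprob :: "'a measure \<Rightarrow> ('a \<Rightarrow> bool) \<Rightarrow> ('a \<Rightarrow> bool) \<Rightarrow> real" where
  "condprob M A B = measure M {\<omega> \<in> space M. A \<omega> \<and> B \<omega>} / measure M {\<omega> \<in> space M. B \<omega>}"

definition survf :: "'a measure \<Rightarrow> ('a \<Rightarrow> real) \<Rightarrow> real \<Rightarrow> real" where
  "survf M X t = measure M {\<omega> \<in> space M. X \<omega> > t}"

text \<open>Lebesgue-Stieltjes measure of the sub-distribution function t \<mapsto> P(X \<le> t, P):
  the law of X restricted to the event P.\<close>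
definition subdistr :: "'a measure \<Rightarrow> ('a \<Rightarrow> real) \<Rightarrow> ('a \<Rightarrow> bool) \<Rightarrow> real measure" where
  "subdistr M X P = distr (density M (\<lambda>\<omega>. indicator {\<omega>. P \<omega>} \<omega>)) borel X"

definition obsT :: "('a \<Rightarrow> real) \<Rightarrow> ('a \<Rightarrow> real) \<Rightarrow> 'a \<Rightarrow> real" where
  "obsT T C \<omega> = min (T \<omega>) (C \<omega>)"

definition obsD :: "('a \<Rightarrow> real) \<Rightarrow> ('a \<Rightarrow> nat) \<Rightarrow> ('a \<Rightarrow> real) \<Rightarrow> 'a \<Rightarrow> nat" where
  "obsD T D C \<omega> = (if T \<omega> \<le> C \<omega> then D \<omega> else 0)"

definition Fmeas :: "'a measure \<Rightarrow> ('a \<Rightarrow> real) \<Rightarrow> ('a \<Rightarrow> nat) \<Rightarrow> nat \<Rightarrow> real measure" where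
  "Fmeas M T D j = subdistr M T (\<lambda>\<omega>. D \<omega> = j)"

definition Ftmeas :: "'a measure \<Rightarrow> ('a \<Rightarrow> real) \<Rightarrow> ('a \<Rightarrow> nat) \<Rightarrow> ('a \<Rightarrow> real) \<Rightarrow> nat \<Rightarrow> real measure" where
  "Ftmeas M T D C j = subdistr M (obsT T C) (\<lambda>\<omega>. obsD T D C \<omega> = j)"

definition Gmeas :: "'a measure \<Rightarrow> ('a \<Rightarrow> real) \<Rightarrow> real measure" where
  "Gmeas M C = distr M borel C"

definition Htil :: "'a measure \<Rightarrow> ('a \<Rightarrow> real) \<Rightarrow> ('a \<Rightarrow> nat) \<Rightarrow> ('a \<Rightarrow> real) \<Rightarrow> nat \<Rightarrow> real \<Rightarrow> real" where
  "Htil M T D C d t = (\<Sum>j\<in>{1..d}. LINT s:{0<..t}|Ftmeas M T D C j.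
       1 / leftlim (survf M (obsT T C)) s)"

definition dHtil :: "'a measure \<Rightarrow> ('a \<Rightarrow> real) \<Rightarrow> ('a \<Rightarrow> nat) \<Rightarrow> ('a \<Rightarrow> real) \<Rightarrow> nat \<Rightarrow> real \<Rightarrow> real" where
  "dHtil M T D C d t = Htil M T D C d t - leftlim (Htil M T D C d) t"

definition Scheck :: "'a measure \<Rightarrow> ('a \<Rightarrow> real) \<Rightarrow> ('a \<Rightarrow> nat) \<Rightarrow> ('a \<Rightarrow> real) \<Rightarrow> nat \<Rightarrow> real \<Rightarrow> real" where
  "Scheck M T D C d t = leftlim (survf M (obsT T C)) t * (1 - dHtil M T D C d t)"

end

theory Submission
  imports Defs
begin

text \<open>
  All integrals against the sub-distributions of \<open>(T, D)\<close> and of the observed pair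
  \<open>(T\<^sub>o\<^sub>b\<^sub>s, D\<^sub>o\<^sub>b\<^sub>s)\<close>, and against the law of \<open>C\<close>, are rewritten as expectations over the
  sample space. For a distribution on \<open>(0, \<infinity>)\<close> with survival function \<open>S\<close> one has
  \<open>d(1/S)(x) = dF(x) / (S(x) S(x-))\<close>, i.e. \<open>\<integral>\<^bsub>(0,v]\<^esub> dF(x) / (S(x) S(x-)) = 1/S(v) - 1\<close> whenever
  \<open>S(v) > 0\<close>; this is the product rule for Lebesgue-Stieltjes measures applied to
  \<open>S \<cdot> (1/S) = 1\<close>. Combined with Fubini on \<open>M \<Otimes> M\<close> it turns the \<open>H\<close>- and \<open>H\<^sub>0\<close>-integrals
  into expectations of \<open>1/S - 1\<close> at \<open>T\<^sub>o\<^sub>b\<^sub>s\<close> and of \<open>1/K - 1\<close> at \<open>C\<close>, with a left limit where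
  the range of integration is cut off. The jump of the observed hazard at \<open>s\<close> is
  \<open>P(T = s \<le> C) / P(T\<^sub>o\<^sub>b\<^sub>s \<ge> s)\<close>, which identifies the check-\<open>S\<close> term with \<open>P(T > s, C \<ge> s)\<close>.
  What remains are pointwise identities between integrands and the complement rule for
  the conditional probabilities.
\<close>

section \<open>Lebesgue-Stieltjes calculus for survival functions\<close>

lemma borel_measurable_antimono:
  fixes f :: "real \<Rightarrow> real"
  assumes "antimono f"
  shows "f \<in> borel_measurable borel"
proof -
  have "mono (\<lambda>x. - f x)" using assms by (auto simp: mono_def antimono_def)
  then have "(\<lambda>x. - (- f x)) \<in> borel_measurable borel"
    by (intro borel_measurable_uminus borel_measurable_mono)
  then show ?thesis by simp
qed

text \<open>Integration by parts: split the square \<open>(a, t]\<^sup>2\<close> of the product measure along the diagonal.\<close>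
lemma emeasure_Ioc_mult_by_parts:
  fixes \<alpha> \<beta> :: "real measure"
  assumes "sigma_finite_measure \<alpha>" "sigma_finite_measure \<beta>"
    and sets_\<alpha>: "sets \<alpha> = sets borel" and sets_\<beta>: "sets \<beta> = sets borel"
  shows "emeasure \<alpha> {a<..t} * emeasure \<beta> {a<..t} =
    (\<integral>\<^sup>+y. indicator {a<..t} y * emeasure \<alpha> {a<..<y} \<partial>\<beta>) +
    (\<integral>\<^sup>+x. indicator {a<..t} x * emeasure \<beta> {a<..x} \<partial>\<alpha>)"
proof -
  interpret \<alpha>: sigma_finite_measure \<alpha> by fact
  interpret \<beta>: sigma_finite_measure \<beta> by fact
  interpret pair_sigma_finite \<alpha> \<beta> by unfold_locales
  have sets_pair: "sets (\<alpha> \<Otimes>\<^sub>M \<beta>) = sets (borel \<Otimes>\<^sub>M borel)"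
    by (rule sets_pair_measure_cong) (auto simp: sets_\<alpha> sets_\<beta>)
  define above where "above = {p \<in> {a<..t} \<times> {a<..t}. fst p < snd p}"
  define below where "below = {p \<in> {a<..t} \<times> {a<..t}. snd p \<le> fst p}"
  have above_sets: "above \<in> sets (\<alpha> \<Otimes>\<^sub>M \<beta>)" unfolding sets_pair above_def by measurable
  have below_sets: "below \<in> sets (\<alpha> \<Otimes>\<^sub>M \<beta>)" unfolding sets_pair below_def by measurable
  have "emeasure \<alpha> {a<..t} * emeasure \<beta> {a<..t} = emeasure (\<alpha> \<Otimes>\<^sub>M \<beta>) ({a<..t} \<times> {a<..t})"
    by (rule \<beta>.emeasure_pair_measure_Times[symmetric]) (auto simp: sets_\<alpha> sets_\<beta>)
  also have "{a<..t} \<times> {a<..t} = above \<union> below" unfolding above_def below_def by auto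
  also have "emeasure (\<alpha> \<Otimes>\<^sub>M \<beta>) (above \<union> below) =
      emeasure (\<alpha> \<Otimes>\<^sub>M \<beta>) above + emeasure (\<alpha> \<Otimes>\<^sub>M \<beta>) below"
    by (rule plus_emeasure[symmetric]) (use above_sets below_sets in \<open>auto simp: above_def below_def\<close>)
  also have "emeasure (\<alpha> \<Otimes>\<^sub>M \<beta>) above = (\<integral>\<^sup>+y. indicator {a<..t} y * emeasure \<alpha> {a<..<y} \<partial>\<beta>)"
    unfolding emeasure_pair_measure_alt2[OF above_sets]
    by (intro nn_integral_cong) (auto simp: above_def indicator_def intro!: arg_cong[where f="emeasure \<alpha>"])
  also have "emeasure (\<alpha> \<Otimes>\<^sub>M \<beta>) below = (\<integral>\<^sup>+x. indicator {a<..t} x * emeasure \<beta> {a<..x} \<partial>\<alpha>)"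
    unfolding \<beta>.emeasure_pair_measure_alt[OF below_sets]
    by (intro nn_integral_cong) (auto simp: below_def indicator_def intro!: arg_cong[where f="emeasure \<beta>"])
  finally show ?thesis .
qed

context real_distribution
begin

definition surv :: "real \<Rightarrow> real" where
  "surv x = measure M {x<..}"

definition surv_left :: "real \<Rightarrow> real" where
  "surv_left x = measure M {x..}"

lemma surv_eq_cdf: "surv x = 1 - cdf M x"
proof -
  have "{x<..} = space M - {..x}" by auto
  then show ?thesis unfolding surv_def cdf_def using prob_compl[of "{..x}"] by simp
qed

lemma surv_left_eq: "surv_left x = 1 - measure M {..<x}"
proof -
  have "{x..} = space M - {..<x}" by auto
  then show ?thesis unfolding surv_left_def using prob_compl[of "{..<x}"] by simp
qed

lemma surv_antimono: "antimono surv"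
  unfolding antimono_def surv_eq_cdf using cdf_nondecreasing by auto

lemma surv_le_surv_left: "surv x \<le> surv_left x"
  unfolding surv_def surv_left_def by (auto intro!: finite_measure_mono)

lemma surv_nonneg: "0 \<le> surv x"
  and surv_left_nonneg: "0 \<le> surv_left x"
  and surv_le_1: "surv x \<le> 1"
  and surv_left_le_1: "surv_left x \<le> 1"
  unfolding surv_def surv_left_def by simp_all

lemma surv_continuous_at_right: "continuous (at_right a) surv"
  unfolding surv_eq_cdf[abs_def] by (intro continuous_intros cdf_is_right_cont)

lemma surv_tendsto_at_left: "(surv \<longlongrightarrow> surv_left a) (at_left a)"
  unfolding surv_eq_cdf[abs_def] surv_left_eq by (intro tendsto_intros cdf_at_left)

lemma surv_measurable[measurable]: "surv \<in> borel_measurable borel"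
  by (rule borel_measurable_antimono[OF surv_antimono])

lemma surv_left_measurable[measurable]: "surv_left \<in> borel_measurable borel"
  by (rule borel_measurable_antimono) (auto simp: antimono_def surv_left_def intro!: finite_measure_mono)

lemma measure_singleton: "measure M {v} = surv_left v - surv v"
proof -
  have "{v..} = {v} \<union> {v<..}" by auto
  then have "surv_left v = measure M {v} + surv v"
    unfolding surv_left_def surv_def using finite_measure_Union[of "{v}" "{v<..}"] by simp
  then show ?thesis by simp
qed

end

locale pos_real_distribution = real_distribution \<mu> for \<mu> :: "real measure" +
  assumes measure_atMost_0: "measure \<mu> {..0} = 0"
begin

lemma surv_nonpos: "x \<le> 0 \<Longrightarrow> surv x = 1"
  using cdf_nondecreasing[of x 0] measure_atMost_0
  by (simp add: surv_eq_cdf cdf_def) (meson measure_nonneg order_antisym)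

lemma surv_left_nonpos:
  assumes "x \<le> 0"
  shows "surv_left x = 1"
proof -
  have "measure \<mu> {..<x} \<le> measure \<mu> {..0}" using assms by (intro finite_measure_mono) auto
  then show ?thesis using measure_atMost_0 measure_nonneg[of \<mu> "{..<x}"] unfolding surv_left_eq by linarith
qed

lemma emeasure_Ioc_0: "0 \<le> t \<Longrightarrow> emeasure \<mu> {0<..t} = ennreal (1 - surv t)"
  using emeasure_Ioc[of 0 t] measure_atMost_0 by (simp add: surv_eq_cdf cdf_def)

lemma emeasure_Ioo_0: "0 < s \<Longrightarrow> emeasure \<mu> {0<..<s} = ennreal (1 - surv_left s)"
proof -
  assume "0 < s"
  then have "measure \<mu> {0<..<s} = measure \<mu> {..<s} - measure \<mu> {..0}"
    by (subst finite_measure_Diff[symmetric]) (auto intro!: arg_cong[where f="measure \<mu>"])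
  then show ?thesis using measure_atMost_0 by (simp add: surv_left_eq emeasure_eq_measure)
qed

lemma by_parts_interval_measure:
  fixes \<Phi> :: "real \<Rightarrow> real"
  assumes mono: "mono \<Phi>" and right_cont: "\<And>a. continuous (at_right a) \<Phi>" and t: "0 \<le> t"
  shows "ennreal ((1 - surv t) * (\<Phi> t - \<Phi> 0)) =
    (\<integral>\<^sup>+y. ennreal (indicator {0<..t} y * (1 - surv_left y)) \<partial>interval_measure \<Phi>) +
    (\<integral>\<^sup>+x. ennreal (indicator {0<..t} x * (\<Phi> x - \<Phi> 0)) \<partial>\<mu>)"
proof -
  define \<nu> where "\<nu> = interval_measure \<Phi>"
  have \<nu>_Ioc: "emeasure \<nu> {0<..x} = ennreal (\<Phi> x - \<Phi> 0)" if "0 \<le> x" for x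
    unfolding \<nu>_def using that mono right_cont by (subst emeasure_interval_measure_Ioc) (auto simp: mono_def)
  have "emeasure \<mu> {0<..t} * emeasure \<nu> {0<..t} =
      (\<integral>\<^sup>+y. indicator {0<..t} y * emeasure \<mu> {0<..<y} \<partial>\<nu>) +
      (\<integral>\<^sup>+x. indicator {0<..t} x * emeasure \<nu> {0<..x} \<partial>\<mu>)"
  proof (rule emeasure_Ioc_mult_by_parts)
    show "sigma_finite_measure \<nu>" unfolding \<nu>_def
      by (rule sigma_finite_interval_measure) (use mono right_cont in \<open>auto simp: mono_def\<close>)
  qed (auto simp: \<nu>_def intro: sigma_finite_measure_axioms)
  also have "(\<integral>\<^sup>+y. indicator {0<..t} y * emeasure \<mu> {0<..<y} \<partial>\<nu>)
      = (\<integral>\<^sup>+y. ennreal (indicator {0<..t} y * (1 - surv_left y)) \<partial>\<nu>)"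
    by (rule nn_integral_cong) (auto simp: indicator_def emeasure_Ioo_0)
  also have "(\<integral>\<^sup>+x. indicator {0<..t} x * emeasure \<nu> {0<..x} \<partial>\<mu>)
      = (\<integral>\<^sup>+x. ennreal (indicator {0<..t} x * (\<Phi> x - \<Phi> 0)) \<partial>\<mu>)"
    by (rule nn_integral_cong) (auto simp: indicator_def \<nu>_Ioc)
  finally show ?thesis
    unfolding \<nu>_def[symmetric] using t mono surv_le_1[of t]
    by (simp add: emeasure_Ioc_0 \<nu>_Ioc ennreal_mult mono_def)
qed

lemma product_rule_interval_measure:
  fixes \<Phi> :: "real \<Rightarrow> real"
  assumes mono: "mono \<Phi>" and right_cont: "\<And>a. continuous (at_right a) \<Phi>"
    and \<Phi>_0: "0 \<le> \<Phi> 0" and t: "0 \<le> t"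
  shows "(\<integral>\<^sup>+y. ennreal (indicator {0<..t} y * surv_left y) \<partial>interval_measure \<Phi>) + ennreal (\<Phi> 0)
       = (\<integral>\<^sup>+x. ennreal (indicator {0<..t} x * \<Phi> x) \<partial>\<mu>) + ennreal (surv t * \<Phi> t)"
proof -
  define \<nu> where "\<nu> = interval_measure \<Phi>"
  have [measurable]: "\<Phi> \<in> borel_measurable borel" using mono by (rule borel_measurable_mono)
  have \<Phi>_t: "\<Phi> 0 \<le> \<Phi> t" using mono t by (auto simp: mono_def)
  define a where "a = (\<integral>\<^sup>+y. ennreal (indicator {0<..t} y * (1 - surv_left y)) \<partial>\<nu>)"
  define b where "b = (\<integral>\<^sup>+x. ennreal (indicator {0<..t} x * (\<Phi> x - \<Phi> 0)) \<partial>\<mu>)"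
  define c where "c = (\<integral>\<^sup>+y. ennreal (indicator {0<..t} y * surv_left y) \<partial>\<nu>)"
  define e where "e = (\<integral>\<^sup>+x. ennreal (indicator {0<..t} x * \<Phi> x) \<partial>\<mu>)"
  have by_parts: "ennreal ((1 - surv t) * (\<Phi> t - \<Phi> 0)) = a + b"
    unfolding a_def b_def \<nu>_def using mono right_cont t by (rule by_parts_interval_measure)
  have a_c: "a + c = ennreal (\<Phi> t - \<Phi> 0)"
  proof -
    have "a + c = (\<integral>\<^sup>+y. ennreal (indicator {0<..t} y * (1 - surv_left y))
        + ennreal (indicator {0<..t} y * surv_left y) \<partial>\<nu>)"
      unfolding a_def c_def by (rule nn_integral_add[symmetric]) (auto simp: \<nu>_def)
    also have "\<dots> = (\<integral>\<^sup>+y. indicator {0<..t} y \<partial>\<nu>)"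
      by (rule nn_integral_cong)
        (auto simp: indicator_def surv_left_le_1 surv_left_nonneg ennreal_plus[symmetric] simp del: ennreal_plus)
    finally show ?thesis
      using mono right_cont t by (simp add: \<nu>_def emeasure_interval_measure_Ioc mono_def)
  qed
  have b_e: "b + ennreal (\<Phi> 0 * (1 - surv t)) = e"
  proof -
    have \<Phi>_0_mass: "ennreal (\<Phi> 0 * (1 - surv t)) = (\<integral>\<^sup>+x. ennreal (\<Phi> 0) * indicator {0<..t} x \<partial>\<mu>)"
      using t \<Phi>_0 surv_le_1[of t] by (simp add: nn_integral_cmult_indicator emeasure_Ioc_0 ennreal_mult)
    have "b + ennreal (\<Phi> 0 * (1 - surv t)) = (\<integral>\<^sup>+x. ennreal (indicator {0<..t} x * (\<Phi> x - \<Phi> 0))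
        + ennreal (\<Phi> 0) * indicator {0<..t} x \<partial>\<mu>)"
      unfolding b_def \<Phi>_0_mass by (rule nn_integral_add[symmetric]) auto
    also have "\<dots> = e" unfolding e_def
      using mono \<Phi>_0 by (intro nn_integral_cong)
        (auto simp: indicator_def mono_def ennreal_plus[symmetric] simp del: ennreal_plus)
    finally show ?thesis .
  qed
  have finite: "a < top" "b < top" "c < top" "e < top"
    using a_c by_parts b_e by (auto simp: less_top[symmetric])
  have "(1 - surv t) * (\<Phi> t - \<Phi> 0) = enn2real a + enn2real b"
    using arg_cong[OF by_parts, of enn2real] finite t \<Phi>_t surv_le_1[of t] by (simp add: enn2real_plus)
  moreover have "enn2real a + enn2real c = \<Phi> t - \<Phi> 0"
    using arg_cong[OF a_c, of enn2real] finite \<Phi>_t by (simp add: enn2real_plus)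
  moreover have "enn2real b + \<Phi> 0 * (1 - surv t) = enn2real e"
    using arg_cong[OF b_e, of enn2real] finite \<Phi>_0 surv_le_1[of t] by (simp add: enn2real_plus)
  ultimately have "enn2real c + \<Phi> 0 = enn2real e + surv t * \<Phi> t" by (simp add: algebra_simps)
  then have "ennreal (enn2real c + \<Phi> 0) = ennreal (enn2real e + surv t * \<Phi> t)" by simp
  then show ?thesis
    using finite \<Phi>_0 surv_nonneg[of t] \<Phi>_t unfolding c_def[symmetric] e_def[symmetric] \<nu>_def[symmetric]
    by simp
qed

lemma surv_pos_of_le: "0 < surv v \<Longrightarrow> x \<le> v \<Longrightarrow> 0 < surv x"
  using surv_antimono by (auto simp: antimono_def intro: less_le_trans)

lemma surv_left_pos_of_le: "0 < surv v \<Longrightarrow> x \<le> v \<Longrightarrow> 0 < surv_left x"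
  using surv_pos_of_le surv_le_surv_left less_le_trans by blast

definition inv_surv_stopped :: "real \<Rightarrow> real \<Rightarrow> real" where
  "inv_surv_stopped v x = 1 / surv (min x v)"

lemma inv_surv_stopped_mono:
  assumes "0 < surv v"
  shows "mono (inv_surv_stopped v)"
proof
  fix x y :: real assume "x \<le> y"
  then have "surv (min y v) \<le> surv (min x v)" using surv_antimono by (auto simp: antimono_def)
  then show "inv_surv_stopped v x \<le> inv_surv_stopped v y"
    unfolding inv_surv_stopped_def using surv_pos_of_le[OF assms, of "min y v"] by (simp add: frac_le)
qed

lemma inv_surv_stopped_continuous_at_right:
  assumes "0 < surv v"
  shows "continuous (at_right a) (inv_surv_stopped v)"
proof (cases "a < v")
  case True
  have "continuous (at_right a) (\<lambda>x. 1 / surv x)"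
    using surv_pos_of_le[OF assms, of a] True by (intro continuous_intros surv_continuous_at_right) auto
  moreover have "eventually (\<lambda>x. 1 / surv x = inv_surv_stopped v x) (at_right a)"
    unfolding eventually_at_right[OF True] inv_surv_stopped_def using True by (auto intro!: exI[of _ v])
  ultimately show ?thesis
    using True unfolding continuous_within
    by (auto simp: inv_surv_stopped_def elim: tendsto_cong[THEN iffD1, rotated])
next
  case False
  have "eventually (\<lambda>x. inv_surv_stopped v a = inv_surv_stopped v x) (at_right a)"
    using eventually_at_right_less[of a] by eventually_elim (use False in \<open>auto simp: inv_surv_stopped_def\<close>)
  then show ?thesis unfolding continuous_within by (rule tendsto_cong[THEN iffD1]) simp
qed

text \<open>Since \<open>S \<Phi> = 1\<close> on \<open>[0, v]\<close> for \<open>\<Phi> = inv_surv_stopped v\<close>, the product rule says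
  \<open>S(y-) d\<Phi>(y) = \<Phi> d\<mu>\<close> there.\<close>
lemma nn_integral_surv_left_interval_measure_eq:
  assumes v: "0 \<le> v" "0 < surv v" and "t \<le> v"
  shows "(\<integral>\<^sup>+y. ennreal (indicator {0<..t} y * surv_left y) \<partial>interval_measure (inv_surv_stopped v))
       = (\<integral>\<^sup>+x. ennreal (indicator {0<..t} x * inv_surv_stopped v x) \<partial>\<mu>)"
proof (cases "0 \<le> t")
  case True
  have "surv t * inv_surv_stopped v t = 1" "inv_surv_stopped v 0 = 1"
    using surv_pos_of_le[OF v(2) \<open>t \<le> v\<close>] \<open>t \<le> v\<close> v(1) by (simp_all add: inv_surv_stopped_def surv_nonpos)
  then show ?thesis
    using product_rule_interval_measure[OF inv_surv_stopped_mono[OF v(2)]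
        inv_surv_stopped_continuous_at_right[OF v(2)] _ True]
    by (simp add: ennreal_add_left_cancel add.commute[of _ 1])
qed simp

lemma nn_integral_inverse_surv_Ioc:
  assumes v: "0 \<le> v" "0 < surv v"
  shows "(\<integral>\<^sup>+x. ennreal (indicator {0<..v} x / (surv x * surv_left x)) \<partial>\<mu>) = ennreal (1 / surv v - 1)"
proof -
  let ?\<Phi> = "inv_surv_stopped v"
  define \<nu> where "\<nu> = interval_measure ?\<Phi>"
  have [measurable]: "?\<Phi> \<in> borel_measurable borel"
    using inv_surv_stopped_mono[OF v(2)] by (rule borel_measurable_mono)
  have \<nu>_Ioc: "emeasure \<nu> {0<..v} = ennreal (1 / surv v - 1)"
    unfolding \<nu>_def using inv_surv_stopped_mono[OF v(2)] inv_surv_stopped_continuous_at_right[OF v(2)] v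
    by (subst emeasure_interval_measure_Ioc) (auto simp: mono_def inv_surv_stopped_def surv_nonpos)
  text \<open>The measures \<open>S(y-) d\<Phi>(y)\<close> and \<open>\<Phi> d\<mu>\<close> on \<open>(0, v]\<close> coincide; integrate \<open>1 / S(y-)\<close> against both.\<close>
  define A where "A = density \<nu> (\<lambda>y. ennreal (indicator {0<..v} y * surv_left y))"
  define B where "B = density \<mu> (\<lambda>x. ennreal (indicator {0<..v} x * ?\<Phi> x))"
  have A_B_atMost: "emeasure A {..x} = emeasure B {..x}" for x
  proof -
    have "emeasure A {..x} = (\<integral>\<^sup>+y. ennreal (indicator {0<..min x v} y * surv_left y) \<partial>\<nu>)"
      unfolding A_def \<nu>_def by (subst emeasure_density) (auto intro!: nn_integral_cong simp: indicator_def)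
    also have "\<dots> = (\<integral>\<^sup>+y. ennreal (indicator {0<..min x v} y * ?\<Phi> y) \<partial>\<mu>)"
      unfolding \<nu>_def using v by (rule nn_integral_surv_left_interval_measure_eq) simp
    also have "\<dots> = emeasure B {..x}"
      unfolding B_def by (subst emeasure_density) (auto intro!: nn_integral_cong simp: indicator_def)
    finally show ?thesis .
  qed
  have A_space: "emeasure A (space A) = (\<integral>\<^sup>+y. ennreal (indicator {0<..v} y * surv_left y) \<partial>\<nu>)"
    unfolding A_def \<nu>_def by (subst emeasure_density) simp_all
  also have "\<dots> \<le> (\<integral>\<^sup>+y. indicator {0<..v} y \<partial>\<nu>)"
    by (rule nn_integral_mono) (auto simp: indicator_def surv_left_le_1)
  also have "\<dots> = emeasure \<nu> {0<..v}" by (simp add: \<nu>_def)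
  finally have "emeasure A (space A) \<noteq> \<infinity>" using \<nu>_Ioc by (auto simp: top_unique)
  moreover have "emeasure B (space B) = emeasure A (space A)"
    unfolding A_space \<nu>_def nn_integral_surv_left_interval_measure_eq[OF v order_refl]
    unfolding B_def by (subst emeasure_density) simp_all
  ultimately have "finite_borel_measure A" "finite_borel_measure B"
    by (auto intro!: finite_borel_measure.intro finite_measureI
        simp: finite_borel_measure_axioms_def A_def B_def \<nu>_def)
  then have "A = B" by (rule cdf_unique') (auto simp: cdf_def2 measure_def A_B_atMost)
  define g where "g y = ennreal (indicator {0<..v} y / surv_left y)" for y
  have [measurable]: "g \<in> borel_measurable borel" unfolding g_def by measurable
  have "(\<integral>\<^sup>+y. g y \<partial>A) = (\<integral>\<^sup>+y. ennreal (indicator {0<..v} y * surv_left y) * g y \<partial>\<nu>)"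
    unfolding A_def by (rule nn_integral_density) (auto simp: \<nu>_def)
  also have "\<dots> = (\<integral>\<^sup>+y. indicator {0<..v} y \<partial>\<nu>)"
  proof (rule nn_integral_cong)
    fix y
    show "ennreal (indicator {0<..v} y * surv_left y) * g y = indicator {0<..v} y"
      using surv_left_pos_of_le[OF v(2), of y]
      by (cases "y \<in> {0<..v}") (simp_all add: g_def ennreal_mult[symmetric])
  qed
  finally have "(\<integral>\<^sup>+y. g y \<partial>A) = emeasure \<nu> {0<..v}" by (simp add: \<nu>_def)
  moreover have "(\<integral>\<^sup>+y. g y \<partial>B) = (\<integral>\<^sup>+x. ennreal (indicator {0<..v} x * ?\<Phi> x) * g x \<partial>\<mu>)"
    unfolding B_def by (rule nn_integral_density) auto
  moreover have "\<dots> = (\<integral>\<^sup>+x. ennreal (indicator {0<..v} x / (surv x * surv_left x)) \<partial>\<mu>)"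
  proof (rule nn_integral_cong)
    fix x
    show "ennreal (indicator {0<..v} x * ?\<Phi> x) * g x = ennreal (indicator {0<..v} x / (surv x * surv_left x))"
      using surv_left_pos_of_le[OF v(2), of x] surv_pos_of_le[OF v(2), of x]
      by (cases "x \<in> {0<..v}") (simp_all add: g_def inv_surv_stopped_def ennreal_mult[symmetric])
  qed
  ultimately show ?thesis using \<open>A = B\<close> \<nu>_Ioc by simp
qed

lemma integrable_inverse_surv_Ioc:
  assumes "0 \<le> v" "0 < surv v"
  shows "integrable \<mu> (\<lambda>x. indicator {0<..v} x / (surv x * surv_left x))"
  by (rule integrableI_nn_integral_finite[OF _ _ nn_integral_inverse_surv_Ioc[OF assms]])
    (auto simp: surv_nonneg surv_left_nonneg)

lemma integral_inverse_surv_Ioc: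
  assumes "0 \<le> v" "0 < surv v"
  shows "(\<integral>x. indicator {0<..v} x / (surv x * surv_left x) \<partial>\<mu>) = 1 / surv v - 1"
proof -
  have "0 \<le> 1 / surv v - 1" using assms surv_le_1[of v] by simp
  then show ?thesis using nn_integral_inverse_surv_Ioc[OF assms]
    by (subst integral_eq_nn_integral) (auto simp: surv_nonneg surv_left_nonneg)
qed

lemma integral_inverse_surv_Ioo:
  assumes v: "0 \<le> v" "0 < surv v"
  shows "(\<integral>x. indicator {0<..<v} x / (surv x * surv_left x) \<partial>\<mu>) = 1 / surv_left v - 1"
proof (cases "v = 0")
  case True
  then show ?thesis by (simp add: surv_left_nonpos)
next
  case False
  have surv_left_v: "0 < surv_left v" using v surv_le_surv_left[of v] by linarith
  have split: "indicator {0<..v} x / (surv x * surv_left x) =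
      indicator {0<..<v} x / (surv x * surv_left x) + indicator {v} x * (1 / (surv v * surv_left v))" for x
    using False v by (auto simp: indicator_def)
  have "integrable \<mu> (\<lambda>x. indicator {0<..<v} x / (surv x * surv_left x))"
    by (rule Bochner_Integration.integrable_bound[OF integrable_inverse_surv_Ioc[OF v]])
      (auto simp: indicator_def surv_nonneg surv_left_nonneg)
  then have "1 / surv v - 1 =
      (\<integral>x. indicator {0<..<v} x / (surv x * surv_left x) \<partial>\<mu>) + measure \<mu> {v} * (1 / (surv v * surv_left v))"
    unfolding integral_inverse_surv_Ioc[OF v, symmetric] split
    by (subst Bochner_Integration.integral_add) (auto simp: emeasure_eq_measure)
  moreover have "measure \<mu> {v} * (1 / (surv v * surv_left v)) = 1 / surv v - 1 / surv_left v"
    using surv_left_v v by (simp add: measure_singleton field_simps)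
  ultimately show ?thesis by simp
qed

end

section \<open>Survival functions of random variables\<close>

definition survf_left :: "'a measure \<Rightarrow> ('a \<Rightarrow> real) \<Rightarrow> real \<Rightarrow> real" where
  "survf_left M X x = measure M {\<omega> \<in> space M. X \<omega> \<ge> x}"

lemma survf_nonneg: "0 \<le> survf M X x"
  and survf_left_nonneg: "0 \<le> survf_left M X x"
  unfolding survf_def survf_left_def by simp_all

lemma set_integral_subdistr:
  fixes X :: "'a \<Rightarrow> real" and f :: "real \<Rightarrow> real"
  assumes [measurable]: "X \<in> borel_measurable M" "Measurable.pred M Q"
    "f \<in> borel_measurable borel" "A \<in> sets borel"
  shows "(LINT s:A|subdistr M X Q. f s) = (\<integral>\<omega>. (if Q \<omega> \<and> X \<omega> \<in> A then f (X \<omega>) else 0) \<partial>M)"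
proof -
  let ?N = "density M (\<lambda>\<omega>. ennreal (indicator {\<omega>. Q \<omega>} \<omega>))"
  have [measurable]: "X \<in> borel_measurable ?N" by simp
  have [measurable]: "(\<lambda>\<omega>. indicator {\<omega>. Q \<omega>} \<omega> :: real) \<in> borel_measurable M"
    by (rule borel_measurable_indicator') (auto simp: pred_def Collect_conj_eq[symmetric] Int_commute)
  have "(\<lambda>\<omega>. indicator {\<omega>. Q \<omega>} \<omega> :: ennreal) = (\<lambda>\<omega>. ennreal (indicator {\<omega>. Q \<omega>} \<omega>))"
    by (auto simp: indicator_def)
  then have "(LINT s:A|subdistr M X Q. f s) = (\<integral>s. indicator A s *\<^sub>R f s \<partial>distr ?N borel X)"
    unfolding set_lebesgue_integral_def subdistr_def by simp
  also have "\<dots> = (\<integral>\<omega>. indicator A (X \<omega>) *\<^sub>R f (X \<omega>) \<partial>?N)"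
    by (rule integral_distr) measurable
  also have "\<dots> = (\<integral>\<omega>. indicator {\<omega>. Q \<omega>} \<omega> *\<^sub>R (indicator A (X \<omega>) *\<^sub>R f (X \<omega>)) \<partial>M)"
    by (rule integral_density) auto
  also have "\<dots> = (\<integral>\<omega>. (if Q \<omega> \<and> X \<omega> \<in> A then f (X \<omega>) else 0) \<partial>M)"
    by (rule Bochner_Integration.integral_cong) (auto simp: indicator_def)
  finally show ?thesis .
qed

context prob_space
begin

lemma sum_set_integral_subdistr:
  fixes X :: "'a \<Rightarrow> real" and K :: "'a \<Rightarrow> 'b" and f :: "real \<Rightarrow> real"
  assumes [measurable]: "X \<in> borel_measurable M" "K \<in> measurable M (count_space UNIV)"
    "f \<in> borel_measurable borel" "A \<in> sets borel"
    and "finite I" and bounded: "\<And>s. s \<in> A \<Longrightarrow> \<bar>f s\<bar> \<le> B"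
  shows "(\<Sum>j\<in>I. LINT s:A|subdistr M X (\<lambda>\<omega>. K \<omega> = j). f s)
       = (\<integral>\<omega>. (if K \<omega> \<in> I \<and> X \<omega> \<in> A then f (X \<omega>) else 0) \<partial>M)"
proof -
  have "(\<Sum>j\<in>I. LINT s:A|subdistr M X (\<lambda>\<omega>. K \<omega> = j). f s)
      = (\<Sum>j\<in>I. \<integral>\<omega>. (if K \<omega> = j \<and> X \<omega> \<in> A then f (X \<omega>) else 0) \<partial>M)"
    by (intro sum.cong refl set_integral_subdistr) measurable
  also have "\<dots> = (\<integral>\<omega>. (\<Sum>j\<in>I. if K \<omega> = j \<and> X \<omega> \<in> A then f (X \<omega>) else 0) \<partial>M)"
    by (rule Bochner_Integration.integral_sum[symmetric])
      (intro integrable_const_bound[where B="\<bar>B\<bar>"] AE_I2; auto dest: bounded)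
  also have "\<dots> = (\<integral>\<omega>. (if K \<omega> \<in> I \<and> X \<omega> \<in> A then f (X \<omega>) else 0) \<partial>M)"
  proof (intro Bochner_Integration.integral_cong refl)
    fix \<omega>
    show "(\<Sum>j\<in>I. if K \<omega> = j \<and> X \<omega> \<in> A then f (X \<omega>) else 0) = (if K \<omega> \<in> I \<and> X \<omega> \<in> A then f (X \<omega>) else 0)"
      using \<open>finite I\<close> by (cases "X \<omega> \<in> A") simp_all
  qed
  finally show ?thesis .
qed

lemma surv_distr:
  assumes "X \<in> borel_measurable M"
  shows "real_distribution.surv (distr M borel X) = survf M X"
    and "real_distribution.surv_left (distr M borel X) = survf_left M X"
proof -
  have "X -` {x<..} \<inter> space M = {\<omega> \<in> space M. x < X \<omega>}"
    and "X -` {x..} \<inter> space M = {\<omega> \<in> space M. x \<le> X \<omega>}" for x by auto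
  then show "real_distribution.surv (distr M borel X) = survf M X"
    and "real_distribution.surv_left (distr M borel X) = survf_left M X"
    using assms by (auto simp: real_distribution.surv_def real_distribution.surv_left_def
        survf_def survf_left_def measure_distr fun_eq_iff)
qed

lemma pos_real_distribution_distr:
  assumes "X \<in> borel_measurable M" and "\<forall>\<omega>\<in>space M. 0 < X \<omega>"
  shows "pos_real_distribution (distr M borel X)"
proof -
  have "X -` {..0} \<inter> space M = {}" using assms(2) by force
  then show ?thesis using assms(1)
    by (intro pos_real_distribution.intro real_distribution_distr pos_real_distribution_axioms.intro)
      (simp_all add: measure_distr)
qed

lemma survf_le_1: "survf M Y x \<le> 1"
  and survf_left_le_1: "survf_left M Y x \<le> 1"
  unfolding survf_def survf_left_def by simp_all

context
  fixes X :: "'a \<Rightarrow> real"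
  assumes X_measurable[measurable]: "X \<in> borel_measurable M"
begin

interpretation X: real_distribution "distr M borel X" by (rule real_distribution_distr) simp

lemma survf_measurable[measurable]: "survf M X \<in> borel_measurable borel"
  using X.surv_measurable by (simp add: surv_distr[OF X_measurable])

lemma survf_left_measurable[measurable]: "survf_left M X \<in> borel_measurable borel"
  using X.surv_left_measurable by (simp add: surv_distr[OF X_measurable])

lemma leftlim_survf: "leftlim (survf M X) = survf_left M X"
proof
  fix a
  show "leftlim (survf M X) a = survf_left M X a"
    using X.surv_tendsto_at_left[of a] unfolding leftlim_def surv_distr[OF X_measurable]
    by (rule tendsto_Lim[OF trivial_limit_at_left_real])
qed

lemma survf_le_survf_of_le:
  assumes "\<forall>\<omega>\<in>space M. Y \<omega> \<le> X \<omega>" and "x \<le> t"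
  shows "survf M Y t \<le> survf M X x"
  unfolding survf_def using assms by (intro finite_measure_mono) auto

lemma survf_le_survf_left_of_le:
  assumes "\<forall>\<omega>\<in>space M. Y \<omega> \<le> X \<omega>" and "x \<le> t"
  shows "survf M Y t \<le> survf_left M X x"
  unfolding survf_def survf_left_def using assms by (intro finite_measure_mono) auto

end

lemma integral_inverse_survf:
  assumes X_measurable[measurable]: "X \<in> borel_measurable M" and X_pos: "\<forall>\<omega>\<in>space M. 0 < X \<omega>"
    and v: "0 \<le> v" "0 < survf M X v"
  shows "(\<integral>\<omega>. (if X \<omega> \<le> v then 1 / (survf M X (X \<omega>) * survf_left M X (X \<omega>)) else 0) \<partial>M)
      = 1 / survf M X v - 1"
    and "(\<integral>\<omega>. (if X \<omega> < v then 1 / (survf M X (X \<omega>) * survf_left M X (X \<omega>)) else 0) \<partial>M)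
      = 1 / survf_left M X v - 1"
proof -
  interpret X: pos_real_distribution "distr M borel X"
    by (rule pos_real_distribution_distr) fact+
  note surv = surv_distr[OF X_measurable]
  have "(\<integral>\<omega>. (if X \<omega> \<le> v then 1 / (survf M X (X \<omega>) * survf_left M X (X \<omega>)) else 0) \<partial>M)
      = (\<integral>\<omega>. indicator {0<..v} (X \<omega>) / (X.surv (X \<omega>) * X.surv_left (X \<omega>)) \<partial>M)"
    using X_pos by (intro Bochner_Integration.integral_cong) (auto simp: surv indicator_def)
  also have "\<dots> = (\<integral>x. indicator {0<..v} x / (X.surv x * X.surv_left x) \<partial>distr M borel X)"
    by (rule integral_distr[symmetric]) measurable
  finally show "(\<integral>\<omega>. (if X \<omega> \<le> v then 1 / (survf M X (X \<omega>) * survf_left M X (X \<omega>)) else 0) \<partial>M)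
      = 1 / survf M X v - 1"
    using X.integral_inverse_surv_Ioc v by (simp add: surv)
  have "(\<integral>\<omega>. (if X \<omega> < v then 1 / (survf M X (X \<omega>) * survf_left M X (X \<omega>)) else 0) \<partial>M)
      = (\<integral>\<omega>. indicator {0<..<v} (X \<omega>) / (X.surv (X \<omega>) * X.surv_left (X \<omega>)) \<partial>M)"
    using X_pos by (intro Bochner_Integration.integral_cong) (auto simp: surv indicator_def)
  also have "\<dots> = (\<integral>x. indicator {0<..<v} x / (X.surv x * X.surv_left x) \<partial>distr M borel X)"
    by (rule integral_distr[symmetric]) measurable
  finally show "(\<integral>\<omega>. (if X \<omega> < v then 1 / (survf M X (X \<omega>) * survf_left M X (X \<omega>)) else 0) \<partial>M)
      = 1 / survf_left M X v - 1"
    using X.integral_inverse_surv_Ioo v by (simp add: surv)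
qed

text \<open>Fubini on \<open>M \<Otimes> M\<close>: integrating \<open>1 / (S(x) S(x-))\<close> in the first variable
  evaluates \<open>\<integral> d(1/S)\<close> up to the random endpoint given by the second one.\<close>
lemma integral_inverse_survf_Fubini:
  assumes [measurable]: "X \<in> borel_measurable M" "A \<in> borel_measurable M" "B \<in> borel_measurable M"
    and X_pos: "\<forall>\<omega>\<in>space M. 0 < X \<omega>"
    and AB: "\<forall>\<omega>\<in>space M. 0 \<le> A \<omega> \<and> 0 \<le> B \<omega> \<and> B \<omega> \<le> b" and b: "0 < survf M X b"
  shows "(\<integral>\<omega>. measure M {\<omega>'\<in>space M. X \<omega> \<le> A \<omega>' \<and> X \<omega> < B \<omega>'}
          / (survf M X (X \<omega>) * survf_left M X (X \<omega>)) \<partial>M)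
       = (\<integral>\<omega>'. (if A \<omega>' < B \<omega>' then 1 / survf M X (A \<omega>') else 1 / survf_left M X (B \<omega>')) - 1 \<partial>M)"
proof -
  let ?S = "survf M X" and ?S\<^sub>l = "survf_left M X"
  have S_ge: "?S b \<le> ?S x" "?S b \<le> ?S\<^sub>l x" if "x \<le> b" for x
    using survf_le_survf_of_le survf_le_survf_left_of_le that by auto
  define F where "F \<omega> \<omega>' = (if X \<omega> \<le> A \<omega>' \<and> X \<omega> < B \<omega>' then 1 / (?S (X \<omega>) * ?S\<^sub>l (X \<omega>)) else 0)"
    for \<omega> \<omega>'
  interpret MM: prob_space "M \<Otimes>\<^sub>M M" by (intro prob_space_pair prob_space_axioms)
  have F_integrable: "integrable (M \<Otimes>\<^sub>M M) (case_prod F)"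
  proof (rule MM.integrable_const_bound)
    show "case_prod F \<in> borel_measurable (M \<Otimes>\<^sub>M M)" unfolding F_def[abs_def] by measurable
    have "\<bar>F \<omega> \<omega>'\<bar> \<le> 1 / (?S b * ?S b)" if "\<omega>' \<in> space M" for \<omega> \<omega>'
    proof (cases "X \<omega> \<le> A \<omega>' \<and> X \<omega> < B \<omega>'")
      case True
      then have "X \<omega> \<le> b" using AB that by force
      then have "?S b * ?S b \<le> ?S (X \<omega>) * ?S\<^sub>l (X \<omega>)" using S_ge b by (intro mult_mono) (auto simp: survf_nonneg)
      then show ?thesis using True b by (simp add: F_def frac_le)
    qed (auto simp: F_def)
    then show "AE p in M \<Otimes>\<^sub>M M. norm (case_prod F p) \<le> 1 / (?S b * ?S b)"
      by (intro AE_I2) (auto simp: space_pair_measure)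
  qed
  have "(\<integral>\<omega>. (\<integral>\<omega>'. F \<omega> \<omega>' \<partial>M) \<partial>M) = (\<integral>\<omega>'. (\<integral>\<omega>. F \<omega> \<omega>' \<partial>M) \<partial>M)"
    using pair_sigma_finite.Fubini_integral[OF _ F_integrable] prob_space_imp_sigma_finite[OF prob_space_axioms]
    by (simp add: pair_sigma_finite_def)
  moreover have "(\<integral>\<omega>'. F \<omega> \<omega>' \<partial>M) = measure M {\<omega>'\<in>space M. X \<omega> \<le> A \<omega>' \<and> X \<omega> < B \<omega>'}
      / (?S (X \<omega>) * ?S\<^sub>l (X \<omega>))" for \<omega>
  proof -
    have "(\<integral>\<omega>'. F \<omega> \<omega>' \<partial>M) = (\<integral>\<omega>'. indicator {\<omega>'\<in>space M. X \<omega> \<le> A \<omega>' \<and> X \<omega> < B \<omega>'} \<omega>'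
        * (1 / (?S (X \<omega>) * ?S\<^sub>l (X \<omega>))) \<partial>M)"
      by (intro Bochner_Integration.integral_cong) (auto simp: F_def)
    then show ?thesis by simp
  qed
  moreover have "(\<integral>\<omega>. F \<omega> \<omega>' \<partial>M)
      = (if A \<omega>' < B \<omega>' then 1 / ?S (A \<omega>') else 1 / ?S\<^sub>l (B \<omega>')) - 1" if "\<omega>' \<in> space M" for \<omega>'
  proof (cases "A \<omega>' < B \<omega>'")
    case True
    have "(\<integral>\<omega>. F \<omega> \<omega>' \<partial>M) = (\<integral>\<omega>. (if X \<omega> \<le> A \<omega>' then 1 / (?S (X \<omega>) * ?S\<^sub>l (X \<omega>)) else 0) \<partial>M)"
      using True by (intro Bochner_Integration.integral_cong) (auto simp: F_def)
    also have "\<dots> = 1 / ?S (A \<omega>') - 1"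
      using AB that True b S_ge(1)[of "A \<omega>'"] by (intro integral_inverse_survf(1) X_pos) auto
    finally show ?thesis using True by simp
  next
    case False
    have "(\<integral>\<omega>. F \<omega> \<omega>' \<partial>M) = (\<integral>\<omega>. (if X \<omega> < B \<omega>' then 1 / (?S (X \<omega>) * ?S\<^sub>l (X \<omega>)) else 0) \<partial>M)"
      using False by (intro Bochner_Integration.integral_cong) (auto simp: F_def)
    also have "\<dots> = 1 / ?S\<^sub>l (B \<omega>') - 1"
      using AB that b S_ge(1)[of "B \<omega>'"] by (intro integral_inverse_survf(2) X_pos) auto
    finally show ?thesis using False by simp
  qed
  ultimately show ?thesis by (simp cong: Bochner_Integration.integral_cong)
qed

end

lemma tendsto_integral_if_le_at_left:
  fixes X h :: "'a \<Rightarrow> real"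
  assumes [measurable]: "X \<in> borel_measurable M" and h: "integrable M h"
  shows "((\<lambda>x. \<integral>\<omega>. (if X \<omega> \<le> x then h \<omega> else 0) \<partial>M) \<longlongrightarrow> (\<integral>\<omega>. (if X \<omega> < s then h \<omega> else 0) \<partial>M))
    (at_left s)"
proof (rule tendsto_at_left_sequentially[of "s - 1"])
  fix x :: "nat \<Rightarrow> real" assume x_less: "\<And>n. x n < s" and x_lim: "x \<longlonglongrightarrow> s"
  have [measurable]: "h \<in> borel_measurable M" using h by simp
  show "(\<lambda>n. \<integral>\<omega>. (if X \<omega> \<le> x n then h \<omega> else 0) \<partial>M) \<longlonglongrightarrow> (\<integral>\<omega>. (if X \<omega> < s then h \<omega> else 0) \<partial>M)"
  proof (rule integral_dominated_convergence[where w="\<lambda>\<omega>. norm (h \<omega>)"])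
    show "AE \<omega> in M. (\<lambda>n. if X \<omega> \<le> x n then h \<omega> else 0) \<longlonglongrightarrow> (if X \<omega> < s then h \<omega> else 0)"
    proof (rule AE_I2)
      fix \<omega>
      show "(\<lambda>n. if X \<omega> \<le> x n then h \<omega> else 0) \<longlonglongrightarrow> (if X \<omega> < s then h \<omega> else 0)"
      proof (cases "X \<omega> < s")
        case True
        then have "eventually (\<lambda>n. X \<omega> < x n) sequentially" by (rule order_tendstoD(1)[OF x_lim])
        then have "eventually (\<lambda>n. (if X \<omega> \<le> x n then h \<omega> else 0) = h \<omega>) sequentially"
          by eventually_elim auto
        then show ?thesis using True by (simp add: tendsto_eventually)
      next
        case False
        then have "\<not> X \<omega> \<le> x n" for n using x_less[of n] by linarith
        then show ?thesis using False by simp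
      qed
    qed
  qed (use h in auto)
qed simp

context prob_space
begin

lemma integrable_nonneg_bounded:
  fixes f :: "'a \<Rightarrow> real"
  assumes "f \<in> borel_measurable M" and "\<And>\<omega>. \<omega> \<in> space M \<Longrightarrow> 0 \<le> f \<omega> \<and> f \<omega> \<le> B"
  shows "integrable M f"
  using assms by (intro integrable_const_bound[where B=B] AE_I2) auto

lemma integral_one_minus_indicator:
  "E \<in> events \<Longrightarrow> (\<integral>\<omega>. 1 - indicator E \<omega> * c \<partial>M) = 1 - prob E * c"
  by (subst Bochner_Integration.integral_diff) (auto simp: emeasure_eq_measure prob_space)

end

section \<open>Censored competing risks\<close>

locale censored_competing_risks = prob_space M
  for M :: "'a measure" and T C :: "'a \<Rightarrow> real" and D :: "'a \<Rightarrow> nat" and d :: nat +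
  assumes T_measurable[measurable]: "T \<in> borel_measurable M"
    and C_measurable[measurable]: "C \<in> borel_measurable M"
    and D_measurable[measurable]: "D \<in> measurable M (count_space UNIV)"
    and T_pos: "\<forall>\<omega>\<in>space M. 0 < T \<omega>" and C_pos: "\<forall>\<omega>\<in>space M. 0 < C \<omega>"
    and D_range: "\<forall>\<omega>\<in>space M. D \<omega> \<in> {1..d}"
begin

lemma obsT_measurable[measurable]: "obsT T C \<in> borel_measurable M"
proof -
  have "obsT T C = (\<lambda>\<omega>. min (T \<omega>) (C \<omega>))" by (simp add: obsT_def fun_eq_iff)
  then show ?thesis by simp
qed

lemma obsD_measurable[measurable]: "obsD T D C \<in> measurable M (count_space UNIV)"
proof -
  have "obsD T D C = (\<lambda>\<omega>. if T \<omega> \<le> C \<omega> then D \<omega> else 0)" by (simp add: obsD_def fun_eq_iff)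
  then show ?thesis by simp
qed

lemma obsT_pos: "\<forall>\<omega>\<in>space M. 0 < obsT T C \<omega>"
  using T_pos C_pos by (simp add: obsT_def)

lemma sum_set_integral_Ftmeas:
  fixes f :: "real \<Rightarrow> real" and B :: real
  assumes [measurable]: "f \<in> borel_measurable borel" "A \<in> sets borel"
    and bounded: "\<And>s. s \<in> A \<Longrightarrow> \<bar>f s\<bar> \<le> B"
  shows "(\<Sum>j\<in>{1..d}. LINT s:A|Ftmeas M T D C j. f s)
       = (\<integral>\<omega>. (if T \<omega> \<le> C \<omega> \<and> T \<omega> \<in> A then f (T \<omega>) else 0) \<partial>M)"
proof -
  have "(\<Sum>j\<in>{1..d}. LINT s:A|Ftmeas M T D C j. f s)
      = (\<integral>\<omega>. (if obsD T D C \<omega> \<in> {1..d} \<and> obsT T C \<omega> \<in> A then f (obsT T C \<omega>) else 0) \<partial>M)"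
    unfolding Ftmeas_def by (rule sum_set_integral_subdistr[where B=B]) (measurable, simp_all add: bounded)
  also have "\<dots> = (\<integral>\<omega>. (if T \<omega> \<le> C \<omega> \<and> T \<omega> \<in> A then f (T \<omega>) else 0) \<partial>M)"
    using D_range by (intro Bochner_Integration.integral_cong) (auto simp: obsD_def obsT_def)
  finally show ?thesis .
qed

lemma sum_set_integral_Fmeas:
  fixes f :: "real \<Rightarrow> real" and B :: real
  assumes [measurable]: "f \<in> borel_measurable borel" "A \<in> sets borel"
    and bounded: "\<And>s. s \<in> A \<Longrightarrow> \<bar>f s\<bar> \<le> B"
  shows "(\<Sum>j\<in>{1..d}. LINT s:A|Fmeas M T D j. f s) = (\<integral>\<omega>. (if T \<omega> \<in> A then f (T \<omega>) else 0) \<partial>M)"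
proof -
  have "(\<Sum>j\<in>{1..d}. LINT s:A|Fmeas M T D j. f s)
      = (\<integral>\<omega>. (if D \<omega> \<in> {1..d} \<and> T \<omega> \<in> A then f (T \<omega>) else 0) \<partial>M)"
    unfolding Fmeas_def by (rule sum_set_integral_subdistr[where B=B]) (measurable, simp_all add: bounded)
  also have "\<dots> = (\<integral>\<omega>. (if T \<omega> \<in> A then f (T \<omega>) else 0) \<partial>M)"
    using D_range by (intro Bochner_Integration.integral_cong) auto
  finally show ?thesis .
qed

lemma set_integral_Ftmeas_0:
  fixes f :: "real \<Rightarrow> real"
  assumes [measurable]: "f \<in> borel_measurable borel" "A \<in> sets borel"
  shows "(LINT s:A|Ftmeas M T D C 0. f s) = (\<integral>\<omega>. (if C \<omega> < T \<omega> \<and> C \<omega> \<in> A then f (C \<omega>) else 0) \<partial>M)"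
proof -
  have "(LINT s:A|Ftmeas M T D C 0. f s)
      = (\<integral>\<omega>. (if obsD T D C \<omega> = 0 \<and> obsT T C \<omega> \<in> A then f (obsT T C \<omega>) else 0) \<partial>M)"
    unfolding Ftmeas_def by (rule set_integral_subdistr) measurable
  also have "\<dots> = (\<integral>\<omega>. (if C \<omega> < T \<omega> \<and> C \<omega> \<in> A then f (C \<omega>) else 0) \<partial>M)"
    using D_range by (intro Bochner_Integration.integral_cong) (auto simp: obsD_def obsT_def)
  finally show ?thesis .
qed

context
  fixes t :: real
  assumes t_nonneg: "0 \<le> t" and at_risk: "0 < survf M (obsT T C) t"
begin

lemma survf_obsT_le:
  assumes "x \<le> t"
  shows "survf M (obsT T C) t \<le> survf M T x" "survf M (obsT T C) t \<le> survf_left M T x"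
    "survf M (obsT T C) t \<le> survf M C x" "survf M (obsT T C) t \<le> survf_left M C x"
    "survf M (obsT T C) t \<le> survf_left M (obsT T C) x"
  using assms by (auto intro!: survf_le_survf_of_le survf_le_survf_left_of_le simp: obsT_def)

lemma inverse_le_at_risk:
  "survf M (obsT T C) t \<le> y \<Longrightarrow> 0 < 1 / y \<and> 1 / y \<le> 1 / survf M (obsT T C) t"
  using at_risk by (simp add: frac_le)

lemma inverse_minus_1_le_at_risk:
  assumes "survf M (obsT T C) t \<le> y" and "y \<le> 1"
  shows "0 \<le> 1 / y - 1 \<and> 1 / y - 1 \<le> 1 / survf M (obsT T C) t"
proof -
  have "1 \<le> 1 / y" using assms at_risk by (subst le_divide_eq_1_pos) auto
  then show ?thesis using inverse_le_at_risk[OF assms(1)] by linarith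
qed

lemma censored_plus_integral_dHtil_eq:
  "(LINT s:{0<..<t}|Ftmeas M T D C 0. 1 / survf M T s)
   + (\<Sum>j\<in>{1..d}. LINT s:{0<..<t}|Ftmeas M T D C j.
        (leftlim (survf M (obsT T C)) s / survf M T s) * (1 / leftlim (survf M (obsT T C)) s))
   = (\<integral>\<omega>. (if obsT T C \<omega> < t then 1 / survf M T (obsT T C \<omega>) else 0) \<partial>M)"
proof -
  let ?S = "survf M T" and ?R = "survf M (obsT T C)"
  have inverse_S_le: "0 < 1 / ?S x \<and> 1 / ?S x \<le> 1 / ?R t" if "x \<le> t" for x
    using inverse_le_at_risk survf_obsT_le(1)[OF that] by blast
  define i\<^sub>0 where "i\<^sub>0 \<omega> = (if C \<omega> < T \<omega> \<and> C \<omega> \<in> {0<..<t} then 1 / ?S (C \<omega>) else 0)" for \<omega>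
  define i\<^sub>1 where "i\<^sub>1 \<omega> = (if T \<omega> \<le> C \<omega> \<and> T \<omega> \<in> {0<..<t} then 1 / ?S (T \<omega>) else 0)" for \<omega>
  have "(LINT s:{0<..<t}|Ftmeas M T D C 0. 1 / ?S s) = integral\<^sup>L M i\<^sub>0"
    unfolding i\<^sub>0_def by (rule set_integral_Ftmeas_0) measurable
  moreover have "(leftlim ?R s / ?S s) * (1 / leftlim ?R s) = 1 / ?S s" if "s < t" for s
    using survf_obsT_le(5)[of s] that at_risk by (simp add: leftlim_survf[OF obsT_measurable])
  then have "(\<Sum>j\<in>{1..d}. LINT s:{0<..<t}|Ftmeas M T D C j. (leftlim ?R s / ?S s) * (1 / leftlim ?R s))
      = (\<Sum>j\<in>{1..d}. LINT s:{0<..<t}|Ftmeas M T D C j. 1 / ?S s)"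
    by (intro sum.cong refl set_lebesgue_integral_cong) (simp_all add: Ftmeas_def subdistr_def)
  moreover have "\<dots> = integral\<^sup>L M i\<^sub>1"
  proof (unfold i\<^sub>1_def, rule sum_set_integral_Ftmeas)
    fix s :: real assume "s \<in> {0<..<t}"
    then show "\<bar>1 / ?S s\<bar> \<le> 1 / ?R t" using inverse_S_le[of s] by simp
  qed measurable
  moreover have "integrable M i\<^sub>0"
  proof (rule integrable_nonneg_bounded)
    show "i\<^sub>0 \<in> borel_measurable M" unfolding i\<^sub>0_def by measurable
    show "0 \<le> i\<^sub>0 \<omega> \<and> i\<^sub>0 \<omega> \<le> 1 / ?R t" for \<omega>
      using inverse_S_le[of "C \<omega>"] at_risk by (auto simp: i\<^sub>0_def)
  qed
  moreover have "integrable M i\<^sub>1"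
  proof (rule integrable_nonneg_bounded)
    show "i\<^sub>1 \<in> borel_measurable M" unfolding i\<^sub>1_def by measurable
    show "0 \<le> i\<^sub>1 \<omega> \<and> i\<^sub>1 \<omega> \<le> 1 / ?R t" for \<omega>
      using inverse_S_le[of "T \<omega>"] at_risk by (auto simp: i\<^sub>1_def)
  qed
  ultimately have "(LINT s:{0<..<t}|Ftmeas M T D C 0. 1 / ?S s)
      + (\<Sum>j\<in>{1..d}. LINT s:{0<..<t}|Ftmeas M T D C j. (leftlim ?R s / ?S s) * (1 / leftlim ?R s))
      = (\<integral>\<omega>. i\<^sub>0 \<omega> + i\<^sub>1 \<omega> \<partial>M)"
    by simp
  also have "\<dots> = (\<integral>\<omega>. (if obsT T C \<omega> < t then 1 / ?S (obsT T C \<omega>) else 0) \<partial>M)"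
    using T_pos C_pos by (intro Bochner_Integration.integral_cong) (auto simp: i\<^sub>0_def i\<^sub>1_def obsT_def)
  finally show ?thesis .
qed

lemma integral_dH_eq:
  "(\<Sum>j\<in>{1..d}. LINT s:{0<..<t}|Fmeas M T D j.
      (leftlim (survf M (obsT T C)) s / survf M T s) * (1 / leftlim (survf M T) s))
   = (\<integral>\<omega>. (if obsT T C \<omega> < t then 1 / survf M T (obsT T C \<omega>) else 1 / survf_left M T t) - 1 \<partial>M)"
proof -
  let ?S = "survf M T" and ?S\<^sub>l = "survf_left M T"
    and ?R = "survf M (obsT T C)" and ?R\<^sub>l = "survf_left M (obsT T C)"
  have "(\<Sum>j\<in>{1..d}. LINT s:{0<..<t}|Fmeas M T D j. (leftlim ?R s / ?S s) * (1 / leftlim ?S s))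
      = (\<integral>\<omega>. (if T \<omega> \<in> {0<..<t} then ?R\<^sub>l (T \<omega>) / ?S (T \<omega>) * (1 / ?S\<^sub>l (T \<omega>)) else 0) \<partial>M)"
  proof (unfold leftlim_survf[OF obsT_measurable] leftlim_survf[OF T_measurable],
      rule sum_set_integral_Fmeas[where B="1 / (?R t * ?R t)"])
    fix s :: real assume "s \<in> {0<..<t}"
    then have "?R t * ?R t \<le> ?S s * ?S\<^sub>l s"
      using survf_obsT_le[of s] at_risk by (intro mult_mono) (auto simp: survf_nonneg)
    moreover have "\<bar>?R\<^sub>l s / ?S s * (1 / ?S\<^sub>l s)\<bar> \<le> 1 / (?S s * ?S\<^sub>l s)"
      by (simp add: survf_nonneg survf_left_nonneg divide_right_mono[OF survf_left_le_1])
    ultimately show "\<bar>?R\<^sub>l s / ?S s * (1 / ?S\<^sub>l s)\<bar> \<le> 1 / (?R t * ?R t)"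
      using at_risk by (smt (verit) frac_le mult_pos_pos)
  qed measurable
  also have "\<dots> = (\<integral>\<omega>. measure M {\<omega>'\<in>space M. T \<omega> \<le> obsT T C \<omega>' \<and> T \<omega> < t}
      / (?S (T \<omega>) * ?S\<^sub>l (T \<omega>)) \<partial>M)"
    using T_pos by (intro Bochner_Integration.integral_cong) (auto simp: survf_left_def)
  also have "\<dots> = (\<integral>\<omega>. (if obsT T C \<omega> < t then 1 / ?S (obsT T C \<omega>) else 1 / ?S\<^sub>l t) - 1 \<partial>M)"
    using obsT_pos t_nonneg survf_obsT_le(1)[of t] at_risk
    by (intro integral_inverse_survf_Fubini T_pos) auto
  finally show ?thesis .
qed

lemma condprob_obsT_less_given_T_ge:
  "condprob M (\<lambda>\<omega>. obsT T C \<omega> < t) (\<lambda>\<omega>. T \<omega> \<ge> t) =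
     (LINT s:{0<..<t}|Ftmeas M T D C 0. 1 / survf M T s)
     + ((\<Sum>j\<in>{1..d}. LINT s:{0<..<t}|Ftmeas M T D C j.
            (leftlim (survf M (obsT T C)) s / survf M T s) * (1 / leftlim (survf M (obsT T C)) s))
        - (\<Sum>j\<in>{1..d}. LINT s:{0<..<t}|Fmeas M T D j.
            (leftlim (survf M (obsT T C)) s / survf M T s) * (1 / leftlim (survf M T) s)))"
proof -
  let ?S = "survf M T" and ?S\<^sub>l = "survf_left M T"
    and ?R = "survf M (obsT T C)" and ?R\<^sub>l = "survf_left M (obsT T C)"
  define g where "g \<omega> = (if obsT T C \<omega> < t then 1 / ?S (obsT T C \<omega>) else 0)" for \<omega>
  define G where "G \<omega> = (if obsT T C \<omega> < t then 1 / ?S (obsT T C \<omega>) else 1 / ?S\<^sub>l t) - 1" for \<omega>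
  have "integrable M g"
  proof (rule integrable_nonneg_bounded)
    show "g \<in> borel_measurable M" unfolding g_def by measurable
    show "0 \<le> g \<omega> \<and> g \<omega> \<le> 1 / ?R t" for \<omega>
      using inverse_le_at_risk[OF survf_obsT_le(1)[of "obsT T C \<omega>"]] at_risk by (auto simp: g_def)
  qed
  moreover have "integrable M G"
  proof (rule integrable_nonneg_bounded)
    show "G \<in> borel_measurable M" unfolding G_def by measurable
    show "0 \<le> G \<omega> \<and> G \<omega> \<le> 1 / ?R t" for \<omega>
      using inverse_minus_1_le_at_risk[OF survf_obsT_le(1)[of "obsT T C \<omega>"] survf_le_1]
        inverse_minus_1_le_at_risk[OF survf_obsT_le(2)[of t] survf_left_le_1]
      by (auto simp: G_def)
  qed
  ultimately have "integral\<^sup>L M g - integral\<^sup>L M G = (\<integral>\<omega>. g \<omega> - G \<omega> \<partial>M)" by simp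
  also have "\<dots> = (\<integral>\<omega>. 1 - indicator {\<omega>\<in>space M. t \<le> obsT T C \<omega>} \<omega> * (1 / ?S\<^sub>l t) \<partial>M)"
    by (intro Bochner_Integration.integral_cong) (auto simp: g_def G_def)
  also have "\<dots> = 1 - ?R\<^sub>l t * (1 / ?S\<^sub>l t)"
    by (subst integral_one_minus_indicator) (auto simp: survf_left_def)
  finally have integrals: "integral\<^sup>L M g - integral\<^sup>L M G = 1 - ?R\<^sub>l t * (1 / ?S\<^sub>l t)" .
  have "measure M {\<omega>\<in>space M. obsT T C \<omega> < t \<and> t \<le> T \<omega>}
      = measure M ({\<omega>\<in>space M. t \<le> T \<omega>} - {\<omega>\<in>space M. t \<le> obsT T C \<omega>})"
    by (rule arg_cong[where f="measure M"]) (auto simp: obsT_def)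
  also have "\<dots> = ?S\<^sub>l t - ?R\<^sub>l t"
    unfolding survf_left_def by (rule finite_measure_Diff) (measurable, measurable, auto simp: obsT_def)
  finally have "condprob M (\<lambda>\<omega>. obsT T C \<omega> < t) (\<lambda>\<omega>. T \<omega> \<ge> t) = 1 - ?R\<^sub>l t * (1 / ?S\<^sub>l t)"
    using survf_obsT_le(2)[of t] at_risk by (simp add: condprob_def survf_left_def[symmetric] field_simps)
  then show ?thesis
    using integrals unfolding add_diff_eq censored_plus_integral_dHtil_eq integral_dH_eq g_def G_def by simp
qed

lemma Htil_eq_integral:
  assumes "x \<le> t"
  shows "Htil M T D C d x
       = (\<integral>\<omega>. (if T \<omega> \<le> C \<omega> \<and> T \<omega> \<in> {0<..x} then 1 / survf_left M (obsT T C) (T \<omega>) else 0) \<partial>M)"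
proof -
  have "Htil M T D C d x = (\<Sum>j\<in>{1..d}. LINT s:{0<..x}|Ftmeas M T D C j. 1 / survf_left M (obsT T C) s)"
    by (simp add: Htil_def leftlim_survf[OF obsT_measurable])
  also have "\<dots> = (\<integral>\<omega>. (if T \<omega> \<le> C \<omega> \<and> T \<omega> \<in> {0<..x} then 1 / survf_left M (obsT T C) (T \<omega>) else 0) \<partial>M)"
  proof (rule sum_set_integral_Ftmeas)
    fix s :: real assume "s \<in> {0<..x}"
    then show "\<bar>1 / survf_left M (obsT T C) s\<bar> \<le> 1 / survf M (obsT T C) t"
      using inverse_le_at_risk[OF survf_obsT_le(5)[of s]] assms by simp
  qed measurable
  finally show ?thesis .
qed

lemma dHtil_eq:
  assumes s: "0 < s" "s \<le> t"
  shows "dHtil M T D C d s = measure M {\<omega>\<in>space M. T \<omega> = s \<and> T \<omega> \<le> C \<omega>} / survf_left M (obsT T C) s"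
proof -
  let ?R\<^sub>l = "survf_left M (obsT T C)"
  define h where "h \<omega> = (if T \<omega> \<le> C \<omega> \<and> T \<omega> \<in> {0<..t} then 1 / ?R\<^sub>l (T \<omega>) else 0)" for \<omega>
  have [measurable]: "h \<in> borel_measurable M" unfolding h_def by measurable
  have h_integrable: "integrable M h"
    by (rule integrable_nonneg_bounded[where B="1 / survf M (obsT T C) t"])
      (use inverse_le_at_risk[OF survf_obsT_le(5)] in \<open>auto simp: h_def survf_nonneg survf_left_nonneg\<close>)
  have Htil: "Htil M T D C d x = (\<integral>\<omega>. (if T \<omega> \<le> x then h \<omega> else 0) \<partial>M)" if "x \<le> t" for x
    unfolding Htil_eq_integral[OF that] h_def using that T_pos
    by (intro Bochner_Integration.integral_cong) auto
  have "((\<lambda>x. \<integral>\<omega>. (if T \<omega> \<le> x then h \<omega> else 0) \<partial>M) \<longlongrightarrow> (\<integral>\<omega>. (if T \<omega> < s then h \<omega> else 0) \<partial>M))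
      (at_left s)"
    by (rule tendsto_integral_if_le_at_left) (simp_all add: h_integrable)
  moreover have "eventually (\<lambda>x. (\<integral>\<omega>. (if T \<omega> \<le> x then h \<omega> else 0) \<partial>M) = Htil M T D C d x) (at_left s)"
    using eventually_at_left_real[of "s - 1" s, simplified] by eventually_elim (use s in \<open>simp add: Htil\<close>)
  ultimately have "(Htil M T D C d \<longlongrightarrow> (\<integral>\<omega>. (if T \<omega> < s then h \<omega> else 0) \<partial>M)) (at_left s)"
    by (rule tendsto_cong[THEN iffD1, rotated])
  then have "dHtil M T D C d s
      = (\<integral>\<omega>. (if T \<omega> \<le> s then h \<omega> else 0) \<partial>M) - (\<integral>\<omega>. (if T \<omega> < s then h \<omega> else 0) \<partial>M)"
    unfolding dHtil_def leftlim_def using Htil[OF s(2)] by (simp add: tendsto_Lim)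
  also have "\<dots> = (\<integral>\<omega>. (if T \<omega> \<le> s then h \<omega> else 0) - (if T \<omega> < s then h \<omega> else 0) \<partial>M)"
    by (intro Bochner_Integration.integral_diff[symmetric] Bochner_Integration.integrable_bound[OF h_integrable])
      auto
  also have "\<dots> = (\<integral>\<omega>. indicator {\<omega>\<in>space M. T \<omega> = s \<and> T \<omega> \<le> C \<omega>} \<omega> * (1 / ?R\<^sub>l s) \<partial>M)"
    using s by (intro Bochner_Integration.integral_cong) (auto simp: h_def)
  finally show ?thesis by simp
qed

lemma one_minus_dHtil_eq:
  assumes s: "0 < s" "s \<le> t"
  shows "1 - dHtil M T D C d s = measure M {\<omega>\<in>space M. s < T \<omega> \<and> s \<le> C \<omega>} / survf_left M (obsT T C) s"
proof -
  have "{\<omega>\<in>space M. s \<le> obsT T C \<omega>}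
      = {\<omega>\<in>space M. s < T \<omega> \<and> s \<le> C \<omega>} \<union> {\<omega>\<in>space M. T \<omega> = s \<and> T \<omega> \<le> C \<omega>}"
    by (auto simp: obsT_def)
  then have "survf_left M (obsT T C) s
      = measure M {\<omega>\<in>space M. s < T \<omega> \<and> s \<le> C \<omega>} + measure M {\<omega>\<in>space M. T \<omega> = s \<and> T \<omega> \<le> C \<omega>}"
    unfolding survf_left_def by (subst finite_measure_Union[symmetric]) auto
  moreover have "0 < survf_left M (obsT T C) s" using survf_obsT_le(5)[OF s(2)] at_risk by linarith
  ultimately show ?thesis using s by (simp add: dHtil_eq field_simps)
qed

lemma Scheck_eq:
  assumes "0 < s" "s \<le> t"
  shows "Scheck M T D C d s = measure M {\<omega>\<in>space M. s < T \<omega> \<and> s \<le> C \<omega>}"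
  using assms survf_obsT_le(5)[OF assms(2)] at_risk
  by (simp add: Scheck_def leftlim_survf[OF obsT_measurable] one_minus_dHtil_eq)

lemma dHtil_less_1:
  assumes "0 < s" "s \<le> t"
  shows "dHtil M T D C d s < 1"
proof -
  have "survf M (obsT T C) t \<le> survf M (obsT T C) s"
    using assms(2) by (intro survf_le_survf_of_le) auto
  also have "\<dots> \<le> measure M {\<omega>\<in>space M. s < T \<omega> \<and> s \<le> C \<omega>}"
    unfolding survf_def by (intro finite_measure_mono) (auto simp: obsT_def)
  finally have "0 < 1 - dHtil M T D C d s"
    unfolding one_minus_dHtil_eq[OF assms] using survf_obsT_le(5)[OF assms(2)] at_risk
    by (intro divide_pos_pos) linarith+
  then show ?thesis by simp
qed

lemma uncensored_plus_integral_dHcheck0_eq: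
  "(\<Sum>j\<in>{1..d}. LINT s:{0<..t}|Ftmeas M T D C j. 1 / leftlim (survf M C) s)
   + (LINT s:{0<..<t}|Ftmeas M T D C 0.
        (Scheck M T D C d s / survf M C s) * (1 / (1 - dHtil M T D C d s))
          * (1 / leftlim (survf M (obsT T C)) s))
   = (\<integral>\<omega>. (if T \<omega> \<le> C \<omega> \<and> T \<omega> \<le> t then 1 / survf_left M C (T \<omega>)
          else if C \<omega> < T \<omega> \<and> C \<omega> < t then 1 / survf M C (C \<omega>) else 0) \<partial>M)"
proof -
  let ?K = "survf M C" and ?K\<^sub>l = "survf_left M C" and ?R = "survf M (obsT T C)"
  define j\<^sub>1 where "j\<^sub>1 \<omega> = (if T \<omega> \<le> C \<omega> \<and> T \<omega> \<in> {0<..t} then 1 / ?K\<^sub>l (T \<omega>) else 0)" for \<omega>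
  define j\<^sub>2 where "j\<^sub>2 \<omega> = (if C \<omega> < T \<omega> \<and> C \<omega> \<in> {0<..<t} then 1 / ?K (C \<omega>) else 0)" for \<omega>
  have "(\<Sum>j\<in>{1..d}. LINT s:{0<..t}|Ftmeas M T D C j. 1 / leftlim ?K s) = integral\<^sup>L M j\<^sub>1"
  proof (unfold leftlim_survf[OF C_measurable] j\<^sub>1_def, rule sum_set_integral_Ftmeas)
    fix s :: real assume "s \<in> {0<..t}"
    then show "\<bar>1 / ?K\<^sub>l s\<bar> \<le> 1 / ?R t" using inverse_le_at_risk[OF survf_obsT_le(4)[of s]] by simp
  qed measurable
  moreover have "(Scheck M T D C d s / ?K s) * (1 / (1 - dHtil M T D C d s)) * (1 / leftlim ?R s) = 1 / ?K s"
    if "s \<in> {0<..<t}" for s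
    using that dHtil_less_1[of s] survf_obsT_le(5)[of s] at_risk
    by (simp add: Scheck_def leftlim_survf[OF obsT_measurable])
  then have "(LINT s:{0<..<t}|Ftmeas M T D C 0.
      (Scheck M T D C d s / ?K s) * (1 / (1 - dHtil M T D C d s)) * (1 / leftlim ?R s))
      = (LINT s:{0<..<t}|Ftmeas M T D C 0. 1 / ?K s)"
    by (intro set_lebesgue_integral_cong) (simp_all add: Ftmeas_def subdistr_def)
  moreover have "\<dots> = integral\<^sup>L M j\<^sub>2"
    unfolding j\<^sub>2_def by (rule set_integral_Ftmeas_0) measurable
  moreover have "integrable M j\<^sub>1"
  proof (rule integrable_nonneg_bounded)
    show "j\<^sub>1 \<in> borel_measurable M" unfolding j\<^sub>1_def by measurable
    show "0 \<le> j\<^sub>1 \<omega> \<and> j\<^sub>1 \<omega> \<le> 1 / ?R t" for \<omega>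
      using inverse_le_at_risk[OF survf_obsT_le(4)[of "T \<omega>"]] at_risk by (auto simp: j\<^sub>1_def)
  qed
  moreover have "integrable M j\<^sub>2"
  proof (rule integrable_nonneg_bounded)
    show "j\<^sub>2 \<in> borel_measurable M" unfolding j\<^sub>2_def by measurable
    show "0 \<le> j\<^sub>2 \<omega> \<and> j\<^sub>2 \<omega> \<le> 1 / ?R t" for \<omega>
      using inverse_le_at_risk[OF survf_obsT_le(3)[of "C \<omega>"]] at_risk by (auto simp: j\<^sub>2_def)
  qed
  ultimately have "(\<Sum>j\<in>{1..d}. LINT s:{0<..t}|Ftmeas M T D C j. 1 / leftlim ?K s)
      + (LINT s:{0<..<t}|Ftmeas M T D C 0.
          (Scheck M T D C d s / ?K s) * (1 / (1 - dHtil M T D C d s)) * (1 / leftlim ?R s))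
      = (\<integral>\<omega>. j\<^sub>1 \<omega> + j\<^sub>2 \<omega> \<partial>M)"
    by simp
  also have "\<dots> = (\<integral>\<omega>. (if T \<omega> \<le> C \<omega> \<and> T \<omega> \<le> t then 1 / ?K\<^sub>l (T \<omega>)
      else if C \<omega> < T \<omega> \<and> C \<omega> < t then 1 / ?K (C \<omega>) else 0) \<partial>M)"
    using T_pos C_pos by (intro Bochner_Integration.integral_cong) (auto simp: j\<^sub>1_def j\<^sub>2_def)
  finally show ?thesis .
qed

lemma integral_dH0_eq:
  "(LINT s:{0<..<t}|Gmeas M C. (Scheck M T D C d s / survf M C s) * (1 / leftlim (survf M C) s))
   = (\<integral>\<omega>. (if C \<omega> < min (T \<omega>) t then 1 / survf M C (C \<omega>)
          else 1 / survf_left M C (min (T \<omega>) t)) - 1 \<partial>M)"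
proof -
  let ?K = "survf M C" and ?K\<^sub>l = "survf_left M C"
  define W where "W s = measure M {\<omega>\<in>space M. s < T \<omega> \<and> s \<le> C \<omega>}" for s
  have [measurable]: "W \<in> borel_measurable borel"
    by (rule borel_measurable_antimono) (auto simp: antimono_def W_def intro!: finite_measure_mono)
  have "(LINT s:{0<..<t}|Gmeas M C. (Scheck M T D C d s / ?K s) * (1 / leftlim ?K s))
      = (LINT s:{0<..<t}|Gmeas M C. W s / ?K s * (1 / ?K\<^sub>l s))"
    by (intro set_lebesgue_integral_cong) (simp_all add: Gmeas_def Scheck_eq W_def leftlim_survf)
  also have "\<dots> = (\<integral>\<omega>. indicator {0<..<t} (C \<omega>) * (W (C \<omega>) / ?K (C \<omega>) * (1 / ?K\<^sub>l (C \<omega>))) \<partial>M)"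
    unfolding set_lebesgue_integral_def Gmeas_def by (subst integral_distr) simp_all
  also have "\<dots> = (\<integral>\<omega>. measure M {\<omega>'\<in>space M. C \<omega> \<le> C \<omega>' \<and> C \<omega> < min (T \<omega>') t}
      / (?K (C \<omega>) * ?K\<^sub>l (C \<omega>)) \<partial>M)"
    using C_pos by (intro Bochner_Integration.integral_cong) (auto simp: indicator_def W_def conj_commute)
  also have "\<dots> = (\<integral>\<omega>. (if C \<omega> < min (T \<omega>) t then 1 / ?K (C \<omega>) else 1 / ?K\<^sub>l (min (T \<omega>) t)) - 1 \<partial>M)"
    using C_pos T_pos t_nonneg survf_obsT_le(3)[of t] at_risk
    by (intro integral_inverse_survf_Fubini[where b=t]) auto
  finally show ?thesis .
qed

lemma condprob_T_le_given_C_ge: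
  "condprob M (\<lambda>\<omega>. T \<omega> \<le> t) (\<lambda>\<omega>. C \<omega> \<ge> t) =
     (\<Sum>j\<in>{1..d}. LINT s:{0<..t}|Ftmeas M T D C j. 1 / leftlim (survf M C) s)
     + ((LINT s:{0<..<t}|Ftmeas M T D C 0.
            (Scheck M T D C d s / survf M C s) * (1 / (1 - dHtil M T D C d s))
              * (1 / leftlim (survf M (obsT T C)) s))
        - (LINT s:{0<..<t}|Gmeas M C.
            (Scheck M T D C d s / survf M C s) * (1 / leftlim (survf M C) s)))"
proof -
  let ?K = "survf M C" and ?K\<^sub>l = "survf_left M C" and ?R = "survf M (obsT T C)"
  define E where "E = {\<omega>\<in>space M. t < T \<omega> \<and> t \<le> C \<omega>}"
  define g where "g \<omega> = (if T \<omega> \<le> C \<omega> \<and> T \<omega> \<le> t then 1 / ?K\<^sub>l (T \<omega>)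
      else if C \<omega> < T \<omega> \<and> C \<omega> < t then 1 / ?K (C \<omega>) else 0)" for \<omega>
  define G where "G \<omega> = (if C \<omega> < min (T \<omega>) t then 1 / ?K (C \<omega>) else 1 / ?K\<^sub>l (min (T \<omega>) t)) - 1"
    for \<omega>
  have "integrable M g"
  proof (rule integrable_nonneg_bounded)
    show "g \<in> borel_measurable M" unfolding g_def by measurable
    show "0 \<le> g \<omega> \<and> g \<omega> \<le> 1 / ?R t" for \<omega>
      using inverse_le_at_risk[OF survf_obsT_le(4)[of "T \<omega>"]]
        inverse_le_at_risk[OF survf_obsT_le(3)[of "C \<omega>"]] at_risk
      by (auto simp: g_def)
  qed
  moreover have "integrable M G"
  proof (rule integrable_nonneg_bounded)
    show "G \<in> borel_measurable M" unfolding G_def by measurable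
    show "0 \<le> G \<omega> \<and> G \<omega> \<le> 1 / ?R t" for \<omega>
      using inverse_minus_1_le_at_risk[OF survf_obsT_le(3)[of "C \<omega>"] survf_le_1]
        inverse_minus_1_le_at_risk[OF survf_obsT_le(4)[of "min (T \<omega>) t"] survf_left_le_1]
      by (auto simp: G_def)
  qed
  ultimately have "integral\<^sup>L M g - integral\<^sup>L M G = (\<integral>\<omega>. g \<omega> - G \<omega> \<partial>M)" by simp
  also have "\<dots> = (\<integral>\<omega>. 1 - indicator E \<omega> * (1 / ?K\<^sub>l t) \<partial>M)"
    by (intro Bochner_Integration.integral_cong) (auto simp: g_def G_def E_def min_def)
  also have "\<dots> = 1 - measure M E * (1 / ?K\<^sub>l t)"
    by (rule integral_one_minus_indicator) (simp add: E_def)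
  finally have integrals: "integral\<^sup>L M g - integral\<^sup>L M G = 1 - measure M E * (1 / ?K\<^sub>l t)" .
  have "measure M {\<omega>\<in>space M. T \<omega> \<le> t \<and> t \<le> C \<omega>} = measure M ({\<omega>\<in>space M. t \<le> C \<omega>} - E)"
    by (rule arg_cong[where f="measure M"]) (auto simp: E_def)
  also have "\<dots> = ?K\<^sub>l t - measure M E"
    unfolding survf_left_def E_def by (rule finite_measure_Diff) (measurable, measurable, auto)
  finally have "condprob M (\<lambda>\<omega>. T \<omega> \<le> t) (\<lambda>\<omega>. C \<omega> \<ge> t) = 1 - measure M E * (1 / ?K\<^sub>l t)"
    using survf_obsT_le(4)[of t] at_risk by (simp add: condprob_def survf_left_def[symmetric] field_simps)
  then show ?thesis
    using integrals unfolding add_diff_eq uncensored_plus_integral_dHcheck0_eq integral_dH0_eq g_def G_def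
    by simp
qed

end

end

theorem lemma2:
  fixes M :: "'a measure" and T C :: "'a \<Rightarrow> real" and D :: "'a \<Rightarrow> nat"
    and d :: nat and t :: real
  assumes "prob_space M"
    and "d \<ge> 1"
    and "T \<in> borel_measurable M" and "C \<in> borel_measurable M"
    and "D \<in> measurable M (count_space UNIV)"
    and "\<forall>\<omega>\<in>space M. T \<omega> > 0" and "\<forall>\<omega>\<in>space M. C \<omega> > 0"
    and "\<forall>\<omega>\<in>space M. D \<omega> \<in> {1..d}"
    and "t \<ge> 0" and "survf M (obsT T C) t > 0"
  shows
    "(condprob M (\<lambda>\<omega>. obsT T C \<omega> < t) (\<lambda>\<omega>. T \<omega> \<ge> t) =
       (LINT s:{0<..<t}|Ftmeas M T D C 0. 1 / survf M T s)
       + ((\<Sum>j\<in>{1..d}. LINT s:{0<..<t}|Ftmeas M T D C j.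
              (leftlim (survf M (obsT T C)) s / survf M T s) * (1 / leftlim (survf M (obsT T C)) s))
          - (\<Sum>j\<in>{1..d}. LINT s:{0<..<t}|Fmeas M T D j.
              (leftlim (survf M (obsT T C)) s / survf M T s) * (1 / leftlim (survf M T) s))))
   \<and> (condprob M (\<lambda>\<omega>. T \<omega> \<le> t) (\<lambda>\<omega>. C \<omega> \<ge> t) =
       (\<Sum>j\<in>{1..d}. LINT s:{0<..t}|Ftmeas M T D C j. 1 / leftlim (survf M C) s)
       + ((LINT s:{0<..<t}|Ftmeas M T D C 0.
              (Scheck M T D C d s / survf M C s) * (1 / (1 - dHtil M T D C d s))
                * (1 / leftlim (survf M (obsT T C)) s))
          - (LINT s:{0<..<t}|Gmeas M C.
              (Scheck M T D C d s / survf M C s) * (1 / leftlim (survf M C) s))))"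
proof -
  interpret censored_competing_risks M T C D d
    using assms by (simp add: censored_competing_risks_def censored_competing_risks_axioms_def)
  show ?thesis
    using assms(9,10) by (intro conjI condprob_obsT_less_given_T_ge condprob_T_le_given_C_ge)
qed

end
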